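(* Let $\mathbf K$ be a commutative field, $p,q\in\mathbb N$, and let $\tau:\mathcal M_p\to\mathcal M_q$ be a transducer. Then its transducer-matrix $M_\tau\in\mathbf K^{\mathcal M_{q\times p}}$ is a recurrence matrix (i.e. lies in $\mathrm{Rec}_{q\times p}(\mathbf K)$) if and only if $\tau$ is a finite-state transducer.
   Context: $\mathcal M_X$ denotes the free monoid on an alphabet $X$ and $\mathcal M_p$ the free monoid on $\{0,\dots,p-1\}$. For $A:\mathcal M_X\to Y$ the transducer $\tau_A:\mathcal M_X\to\mathcal M_Y$ is the length-preserving map with $\tau_A(\emptyset)=\emptyset$ and $\tau_A(u_1\dots u_n)=A[u_1u_2\dots u_n]A[u_2\dots u_n]\cdots A[u_{n-1}u_n]A[u_n]$; a transducer $\mathcal M_p\to\mathcal M_q$ is a map of the form $\tau_A$ with $A:\mathcal M_p\to\{0,\dots,q-1\}$, and it is finite-state if $A$ can be chosen automatic. A function $A:\mathcal M_X\to Y$ is automatic if there are a finite set $\mathcal V$, $v_*\in\mathcal V$, $\delta:\mathcal V\times X\to\mathcal V$ and $w:\mathcal V\to Y$ (with $X$ finite) such that $A[x_1\dots x_n]=w(v)$, $v$ obtained from $v_*$ by applying $\delta(\cdot,x_1),\dots,\delta(\cdot,x_n)$ successively. $\mathcal M_{q\times p}$ is the set of pairs $(U,W)$ of words of common length with $U$ over $\{0,\dots,q-1\}$, $W$ over $\{0,\dots,p-1\}$; the transducer-matrix of $\tau$ is $M_\tau[U,W]=1$ if $\tau(W)=U$ and $0$ otherwise. For $M:\mathcal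 M_{q\times p}\to\mathbf K$, $(\rho(S,T)M)[U,W]=M[US,WT]$, and $\mathrm{Rec}_{q\times p}(\mathbf K)$ is the set of $M$ with finite-dimensional span of $\{\rho(S,T)M\}$. *)

theory Defs
  imports Main
begin

definition words :: "nat \<Rightarrow> nat list set" where
  "words p = {w. \<forall>x\<in>set w. x < p}"

definition tau :: "(nat list \<Rightarrow> nat) \<Rightarrow> nat list \<Rightarrow> nat list" where
  "tau A u = map (\<lambda>i. A (drop i u)) [0..<length u]"

text \<open>A map M_p -> M_q (only its values on words over p matter) is a transducer.\<close>
definition is_transducer :: "nat \<Rightarrow> nat \<Rightarrow> (nat list \<Rightarrow> nat list) \<Rightarrow> bool" where
  "is_transducer p q \<tau> \<longleftrightarrow>
     (\<exists>A. (\<forall>w\<in>words p. A w < q) \<and> (\<forall>w\<in>words p. \<tau> w = tau A w))"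

text \<open>Automatic functions M_X -> Y with X = {0..p-1}; the finite state set is
  taken inside nat (no loss of generality, any finite set injects into nat).\<close>
definition automatic :: "nat \<Rightarrow> (nat list \<Rightarrow> 'y) \<Rightarrow> bool" where
  "automatic p A \<longleftrightarrow>
     (\<exists>(V::nat set) v0 \<delta> out. finite V \<and> v0 \<in> V \<and>
        (\<forall>v\<in>V. \<forall>x<p. \<delta> v x \<in> V) \<and>
        (\<forall>w\<in>words p. A w = out (foldl \<delta> v0 w)))"

definition finite_state_transducer :: "nat \<Rightarrow> nat \<Rightarrow> (nat list \<Rightarrow> nat list) \<Rightarrow> bool" where
  "finite_state_transducer p q \<tau> \<longleftrightarrow>
     (\<exists>A. (\<forall>w\<in>words p. A w < q) \<and> automatic p A \<and> (\<forall>w\<in>words p. \<tau> w = tau A w))"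

definition pairs :: "nat \<Rightarrow> nat \<Rightarrow> (nat list \<times> nat list) set" where
  "pairs q p = {(U, W). length U = length W \<and> U \<in> words q \<and> W \<in> words p}"

text \<open>Transducer-matrix; extended by 0 outside M_{q x p}.\<close>
definition transducer_matrix ::
  "nat \<Rightarrow> nat \<Rightarrow> (nat list \<Rightarrow> nat list) \<Rightarrow> nat list \<times> nat list \<Rightarrow> 'k::field" where
  "transducer_matrix q p \<tau> = (\<lambda>(U, W). if (U, W) \<in> pairs q p \<and> \<tau> W = U then 1 else 0)"

definition rho :: "nat list \<Rightarrow> nat list \<Rightarrow> (nat list \<times> nat list \<Rightarrow> 'k) \<Rightarrow> nat list \<times> nat list \<Rightarrow> 'k" where
  "rho S T M = (\<lambda>(U, W). M (U @ S, W @ T))"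

definition lin_span :: "('a \<Rightarrow> 'k::field) set \<Rightarrow> ('a \<Rightarrow> 'k) set" where
  "lin_span B = {f. \<exists>F c. finite F \<and> F \<subseteq> B \<and> f = (\<lambda>x. \<Sum>b\<in>F. c b * b x)}"

text \<open>Rec_{q x p}(K): the span of all shifts rho(S,T) M, (S,T) in M_{q x p},
  is finite-dimensional, i.e. contained in the span of a finite set.\<close>
definition Rec :: "nat \<Rightarrow> nat \<Rightarrow> (nat list \<times> nat list \<Rightarrow> 'k::field) set" where
  "Rec q p = {M. \<exists>B. finite B \<and> (\<forall>(S, T)\<in>pairs q p. rho S T M \<in> lin_span B)}"

end

theory Submission
  imports Defs "HOL-Library.FuncSet"
begin

text \<open>Fix a letter function A of \<open>\<tau>\<close> and consider its right quotients \<open>A (_ @ T)\<close> on nonempty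
  words; both sides of the equivalence say that there are only finitely many of them.
  The shift of \<open>M\<^sub>\<tau>\<close> by (S, T) vanishes unless \<open>S = \<tau> T\<close>, and is otherwise the 0/1-valued graph
  matrix of the transducer with letter function \<open>A (_ @ T)\<close>, from which this right quotient can be
  read off. A finite-dimensional space of functions contains only finitely many functions with
  values in a finite set, since such a function is determined by its values at finitely many
  points. On the automaton side, the right quotients of an automatic function factor through its
  finite state set; conversely, finitely many right quotients leave only finitely many left
  quotients \<open>A (w @ _)\<close>, and these serve as the states of an automaton (Myhill-Nerode).\<close>

lemma words_Nil [simp]: "[] \<in> words p"
  by (simp add: words_def)

lemma words_Cons [simp]: "x # w \<in> words p \<longleftrightarrow> x < p \<and> w \<in> words p"
  by (auto simp: words_def)

lemma words_append [simp]: "w @ T \<in> words p \<longleftrightarrow> w \<in> words p \<and> T \<in> words p"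
  by (auto simp: words_def)

lemma words_drop: "w \<in> words p \<Longrightarrow> drop i w \<in> words p"
  by (auto simp: words_def dest: in_set_dropD)

lemma length_tau [simp]: "length (tau A u) = length u"
  by (simp add: tau_def)

lemma tau_append:
  "tau A (W @ T) = map (\<lambda>i. A (drop i W @ T)) [0..<length W] @ tau A T"
  by (rule nth_equalityI) (auto simp: tau_def nth_append)

lemma tau_in_words:
  assumes "\<forall>w\<in>words p. A w < q" and "W \<in> words p"
  shows "tau A W \<in> words q"
  using assms by (auto simp: tau_def words_def in_set_conv_nth dest: in_set_dropD)

lemma lin_span_finite_sum:
  assumes "finite B" and "f \<in> lin_span B"
  obtains c where "f = (\<lambda>x. \<Sum>b\<in>B. c b * b x)"
proof -
  from assms(2) obtain F c where F: "finite F" "F \<subseteq> B" and f: "f = (\<lambda>x. \<Sum>b\<in>F. c b * b x)"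
    by (auto simp: lin_span_def)
  have "(\<Sum>b\<in>B. (if b \<in> F then c b else 0) * b x) = (\<Sum>b\<in>F. c b * b x)" for x
    using assms(1) F(2) by (intro sum.mono_neutral_cong_right) auto
  then show thesis
    using f by (intro that[of "\<lambda>b. if b \<in> F then c b else 0"]) auto
qed

lemma finite_determining_set:
  fixes B :: "('a \<Rightarrow> 'k::field) set"
  assumes "finite B"
  shows "\<exists>X. finite X \<and>
    (\<forall>c. (\<forall>x\<in>X. (\<Sum>b\<in>B. c b * b x) = 0) \<longrightarrow> (\<forall>x. (\<Sum>b\<in>B. c b * b x) = 0))"
  using assms
proof (induction B rule: finite_induct)
  case empty
  then show ?case by auto
next
  case (insert b B)
  from insert.IH obtain X where X: "finite X"
    and determines: "\<And>c. \<forall>x\<in>X. (\<Sum>b\<in>B. c b * b x) = 0 \<Longrightarrow> \<forall>x. (\<Sum>b\<in>B. c b * b x) = 0"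
    by blast
  have sum_insert: "(\<Sum>b\<in>insert b B. c b * b x) = c b * b x + (\<Sum>b\<in>B. c b * b x)" for c x
    using insert.hyps by simp
  show ?case
  proof (cases "\<forall>c. (\<forall>x\<in>X. (\<Sum>b\<in>insert b B. c b * b x) = 0)
                  \<longrightarrow> (\<forall>x. (\<Sum>b\<in>insert b B. c b * b x) = 0)")
    case True
    then show ?thesis using X by blast
  next
    case False
    then obtain c0 x0 where c0_X: "\<forall>x\<in>X. (\<Sum>b\<in>insert b B. c0 b * b x) = 0"
      and c0_x0: "(\<Sum>b\<in>insert b B. c0 b * b x0) \<noteq> 0"
      by blast
    have "c0 b \<noteq> 0"
    proof
      assume "c0 b = 0"
      then have "\<forall>x. (\<Sum>b\<in>B. c0 b * b x) = 0"
        using c0_X by (intro determines) (simp add: sum_insert)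
      then show False using c0_x0 \<open>c0 b = 0\<close> by (simp add: sum_insert)
    qed
    have "\<forall>x. (\<Sum>b\<in>insert b B. c b * b x) = 0"
      if c_vanishes: "\<forall>x\<in>insert x0 X. (\<Sum>b\<in>insert b B. c b * b x) = 0" for c
    proof -
      define k where "k = c b / c0 b"
      have reduce: "(\<Sum>b\<in>B. (c b - k * c0 b) * b x) =
          (\<Sum>b\<in>insert b B. c b * b x) - k * (\<Sum>b\<in>insert b B. c0 b * b x)" for x
        unfolding sum_insert using \<open>c0 b \<noteq> 0\<close>
        by (simp add: k_def algebra_simps sum_subtractf sum_distrib_left)
      have "\<forall>x. (\<Sum>b\<in>B. (c b - k * c0 b) * b x) = 0"
        using c_vanishes c0_X by (intro determines) (simp add: reduce)
      moreover from this have "k = 0"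
        using reduce[of x0] c_vanishes c0_x0 by simp
      ultimately show ?thesis using reduce by simp
    qed
    then show ?thesis using X by (intro exI[of _ "insert x0 X"]) blast
  qed
qed

lemma finite_lin_span_range_subset:
  fixes B :: "('a \<Rightarrow> 'k::field) set"
  assumes "finite B" and "finite Y"
  shows "finite {f \<in> lin_span B. range f \<subseteq> Y}"
proof -
  obtain X where X: "finite X"
    and determines: "\<And>c. \<forall>x\<in>X. (\<Sum>b\<in>B. c b * b x) = 0 \<Longrightarrow> \<forall>x. (\<Sum>b\<in>B. c b * b x) = 0"
    using finite_determining_set[OF assms(1)] by blast
  let ?F = "{f \<in> lin_span B. range f \<subseteq> Y}"
  have "inj_on (\<lambda>f. restrict f X) ?F"
  proof (rule inj_onI)
    fix f g assume "f \<in> ?F" "g \<in> ?F" and restr: "restrict f X = restrict g X"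
    then have "f \<in> lin_span B" "g \<in> lin_span B" by simp_all
    obtain cf where f: "f = (\<lambda>x. \<Sum>b\<in>B. cf b * b x)"
      using lin_span_finite_sum[OF assms(1) \<open>f \<in> lin_span B\<close>] .
    obtain cg where g: "g = (\<lambda>x. \<Sum>b\<in>B. cg b * b x)"
      using lin_span_finite_sum[OF assms(1) \<open>g \<in> lin_span B\<close>] .
    have diff: "(\<Sum>b\<in>B. (cf b - cg b) * b x) = f x - g x" for x
      unfolding f g by (simp add: algebra_simps sum_subtractf)
    have "\<forall>x\<in>X. f x = g x" using restr by (metis restrict_apply')
    then have "\<forall>x. (\<Sum>b\<in>B. (cf b - cg b) * b x) = 0"
      by (intro determines) (simp add: diff)
    then show "f = g" by (simp add: diff fun_eq_iff)
  qed
  moreover have "(\<lambda>f. restrict f X) ` ?F \<subseteq> PiE X (\<lambda>_. Y)" by auto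
  then have "finite ((\<lambda>f. restrict f X) ` ?F)"
    using X assms(2) by (meson finite_PiE finite_subset)
  ultimately show ?thesis using finite_imageD by blast
qed

definition left_quotient :: "nat \<Rightarrow> (nat list \<Rightarrow> 'y) \<Rightarrow> nat list \<Rightarrow> nat list \<Rightarrow> 'y" where
  "left_quotient p F w = (\<lambda>T. if T \<in> words p then F (w @ T) else undefined)"

text \<open>Only nonempty prefixes w count: on \<open>W @ T\<close> the transducer consults A at \<open>drop i W @ T\<close>
  with \<open>i < length W\<close> only, so \<open>A T\<close> itself is invisible in the shifts of \<open>M\<^sub>\<tau>\<close>.\<close>

definition right_quotient :: "nat \<Rightarrow> (nat list \<Rightarrow> 'y) \<Rightarrow> nat list \<Rightarrow> nat list \<Rightarrow> 'y" where
  "right_quotient p F T = (\<lambda>w. if w \<in> words p \<and> w \<noteq> [] then F (w @ T) else undefined)"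

lemma left_quotient_snoc:
  assumes "x < p"
  shows "left_quotient p F (w @ [x]) =
    (\<lambda>T. if T \<in> words p then left_quotient p F w (x # T) else undefined)"
  using assms by (auto simp: left_quotient_def)

lemma foldl_in_states:
  assumes "\<forall>v\<in>V. \<forall>x<p. \<delta> v x \<in> V" and "v \<in> V" and "w \<in> words p"
  shows "foldl \<delta> v w \<in> V"
  using assms(2,3) by (induction w arbitrary: v) (auto simp: assms(1))

text \<open>The states are the left quotients, numbered by an initial segment of \<^typ>\<open>nat\<close>.\<close>

lemma automatic_if_finite_left_quotients:
  assumes "finite (left_quotient p F ` words p)"
  shows "automatic p F"
proof -
  let ?R = "left_quotient p F ` words p"
  define V where "V = {0..<card ?R}"
  obtain h where h: "bij_betw h V ?R"
    using ex_bij_betw_nat_finite[OF assms] unfolding V_def by blast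
  define g where "g = inv_into V h"
  have g: "g r \<in> V" "h (g r) = r" if "r \<in> ?R" for r
    using h that unfolding g_def bij_betw_def by (auto intro: inv_into_into f_inv_into_f)
  define \<delta> where "\<delta> n x = g (\<lambda>T. if T \<in> words p then h n (x # T) else undefined)" for n x
  define v0 where "v0 = g (left_quotient p F [])"
  have step: "\<delta> v x = g (left_quotient p F (w @ [x]))"
    if "h v = left_quotient p F w" and "x < p" for v w x
    unfolding \<delta>_def left_quotient_snoc[OF that(2)] that(1) ..
  have reach: "foldl \<delta> v0 w \<in> V \<and> h (foldl \<delta> v0 w) = left_quotient p F w" if "w \<in> words p" for w
    using that
  proof (induction w rule: rev_induct)
    case Nil
    then show ?case using g[of "left_quotient p F []"] by (simp add: v0_def)
  next
    case (snoc x w)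
    then show ?case using g step by simp
  qed
  have "\<delta> v x \<in> V" if "v \<in> V" and "x < p" for v x
  proof -
    obtain w where "w \<in> words p" and "h v = left_quotient p F w"
      using h \<open>v \<in> V\<close> unfolding bij_betw_def by blast
    then show ?thesis using g step \<open>x < p\<close> by simp
  qed
  moreover have "\<forall>w\<in>words p. F w = h (foldl \<delta> v0 w) []"
    using reach by (simp add: left_quotient_def)
  moreover have "finite V" "v0 \<in> V"
    using reach[of "[]"] by (simp_all add: V_def)
  ultimately show ?thesis
    unfolding automatic_def by (intro exI[of _ V] exI[of _ v0] exI[of _ \<delta>] exI[of _ "\<lambda>n. h n []"]) blast
qed

text \<open>For nonempty w, the left quotient by w is determined by the values at w of the finitely
  many right quotients.\<close>

lemma finite_left_quotients_if_finite_right_quotients: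
  fixes F :: "nat list \<Rightarrow> 'y"
  assumes "finite (F ` words p)" and "finite (right_quotient p F ` words p)"
  shows "finite (left_quotient p F ` words p)"
proof -
  let ?C = "right_quotient p F ` words p"
  define \<Psi> :: "((nat list \<Rightarrow> 'y) \<Rightarrow> 'y) \<Rightarrow> nat list \<Rightarrow> 'y" where "\<Psi> \<phi> = (\<lambda>T. if T \<in> words p then \<phi> (right_quotient p F T) else undefined)" for \<phi>
  have "left_quotient p F w \<in> insert (left_quotient p F []) (\<Psi> ` PiE ?C (\<lambda>_. F ` words p))"
    if "w \<in> words p" for w
  proof (cases "w = []")
    case False
    have "restrict (\<lambda>c. c w) ?C \<in> PiE ?C (\<lambda>_. F ` words p)"
      using \<open>w \<in> words p\<close> False by (auto simp: right_quotient_def)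
    moreover have "left_quotient p F w = \<Psi> (restrict (\<lambda>c. c w) ?C)"
      using \<open>w \<in> words p\<close> False by (auto simp: \<Psi>_def left_quotient_def right_quotient_def)
    ultimately show ?thesis by blast
  qed simp
  then have "left_quotient p F ` words p \<subseteq> insert (left_quotient p F []) (\<Psi> ` PiE ?C (\<lambda>_. F ` words p))"
    by blast
  then show ?thesis
    using assms by (meson finite_PiE finite_imageI finite_insert finite_subset)
qed

lemma finite_right_quotients_if_automatic:
  fixes F :: "nat list \<Rightarrow> 'y"
  assumes "automatic p F"
  shows "finite (right_quotient p F ` words p)"
proof -
  obtain V and v0 :: nat and \<delta> out where V: "finite V" "v0 \<in> V" "\<forall>v\<in>V. \<forall>x<p. \<delta> v x \<in> V"
    and F: "\<forall>w\<in>words p. F w = out (foldl \<delta> v0 w)"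
    using assms unfolding automatic_def by blast
  define \<Phi> :: "(nat \<Rightarrow> 'y) \<Rightarrow> nat list \<Rightarrow> 'y" where "\<Phi> \<phi> = (\<lambda>w. if w \<in> words p \<and> w \<noteq> [] then \<phi> (foldl \<delta> v0 w) else undefined)" for \<phi>
  have "right_quotient p F T = \<Phi> (restrict (\<lambda>v. out (foldl \<delta> v T)) V)" if "T \<in> words p" for T
    using that V F foldl_in_states[OF V(3,2)] by (auto simp: right_quotient_def \<Phi>_def)
  moreover have "restrict (\<lambda>v. out (foldl \<delta> v T)) V \<in> PiE V (\<lambda>_. out ` V)" if "T \<in> words p" for T
    using that foldl_in_states[OF V(3)] by auto
  ultimately have "right_quotient p F ` words p \<subseteq> \<Phi> ` PiE V (\<lambda>_. out ` V)"
    by blast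
  then show ?thesis
    using V(1) by (meson finite_PiE finite_imageI finite_subset)
qed

lemma automatic_iff_finite_right_quotients:
  assumes "finite (F ` words p)"
  shows "automatic p F \<longleftrightarrow> finite (right_quotient p F ` words p)"
  using assms automatic_if_finite_left_quotients finite_left_quotients_if_finite_right_quotients
    finite_right_quotients_if_automatic by blast

definition graph_matrix :: "nat \<Rightarrow> (nat list \<Rightarrow> nat list) \<Rightarrow> nat list \<times> nat list \<Rightarrow> 'k::zero_neq_one" where
  "graph_matrix p \<sigma> = (\<lambda>(U, W). if W \<in> words p \<and> \<sigma> W = U then 1 else 0)"

lemma range_graph_matrix: "range (graph_matrix p \<sigma>) \<subseteq> {0, 1}"
  by (auto simp: graph_matrix_def split: if_splits)

lemma graph_matrix_eqD:
  assumes "(graph_matrix p \<sigma> :: _ \<Rightarrow> 'k::zero_neq_one) = graph_matrix p \<sigma>'" and "W \<in> words p"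
  shows "\<sigma> W = \<sigma>' W"
proof -
  have "(graph_matrix p \<sigma> (\<sigma> W, W) :: 'k) = graph_matrix p \<sigma>' (\<sigma> W, W)"
    using assms(1) by simp
  then show ?thesis
    using assms(2) by (simp add: graph_matrix_def split: if_splits)
qed

lemma tau_eqD:
  assumes "tau A W = tau A' W" and "W \<noteq> []"
  shows "A W = A' W"
  using arg_cong[OF assms(1), of "\<lambda>U. U ! 0"] assms(2) by (simp add: tau_def)

lemma tau_append_right_quotient:
  assumes "W \<in> words p"
  shows "tau A (W @ T) = tau (right_quotient p A T) W @ tau A T"
proof -
  have "tau (right_quotient p A T) W = map (\<lambda>i. A (drop i W @ T)) [0..<length W]"
    using assms by (auto simp: tau_def right_quotient_def words_drop)
  then show ?thesis by (simp add: tau_append)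
qed

lemma rho_transducer_matrix:
  assumes A: "\<forall>w\<in>words p. A w < q" and \<tau>: "\<forall>w\<in>words p. \<tau> w = tau A w"
    and T: "T \<in> words p" and len: "length S = length T"
  shows "rho S T (transducer_matrix q p \<tau>) =
    (if \<tau> T = S then graph_matrix p (tau (right_quotient p A T)) else (\<lambda>_. 0))"
proof (rule ext, clarify)
  fix U W
  show "rho S T (transducer_matrix q p \<tau>) (U, W) =
    (if \<tau> T = S then graph_matrix p (tau (right_quotient p A T)) else (\<lambda>_. 0)) (U, W)"
  proof (cases "W \<in> words p")
    case False
    then show ?thesis by (simp add: rho_def transducer_matrix_def pairs_def graph_matrix_def)
  next
    case True
    have split: "\<tau> (W @ T) = tau (right_quotient p A T) W @ \<tau> T"
      using \<tau> True T by (simp add: tau_append_right_quotient)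
    have "(U @ S, W @ T) \<in> pairs q p \<and> \<tau> (W @ T) = U @ S \<longleftrightarrow>
        tau (right_quotient p A T) W = U \<and> \<tau> T = S"
    proof
      assume "(U @ S, W @ T) \<in> pairs q p \<and> \<tau> (W @ T) = U @ S"
      then have "length U = length W" and "\<tau> (W @ T) = U @ S"
        using len by (auto simp: pairs_def)
      then show "tau (right_quotient p A T) W = U \<and> \<tau> T = S"
        using split by simp
    next
      assume "tau (right_quotient p A T) W = U \<and> \<tau> T = S"
      then show "(U @ S, W @ T) \<in> pairs q p \<and> \<tau> (W @ T) = U @ S"
        using split tau_in_words[OF A, of "W @ T"] \<tau> True T len by (auto simp: pairs_def)
    qed
    then show ?thesis
      using True by (simp add: rho_def transducer_matrix_def graph_matrix_def)
  qed
qed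

lemma lin_span_zero: "(\<lambda>_. 0) \<in> lin_span B"
  unfolding lin_span_def by (intro CollectI exI[of _ "{}"]) auto

lemma lin_span_superset: "b \<in> B \<Longrightarrow> b \<in> lin_span B"
  unfolding lin_span_def by (intro CollectI exI[of _ "{b}"] exI[of _ "\<lambda>_. 1"]) auto

lemma transducer_matrix_in_Rec_iff:
  assumes A: "\<forall>w\<in>words p. A w < q" and \<tau>: "\<forall>w\<in>words p. \<tau> w = tau A w"
  shows "(transducer_matrix q p \<tau> :: _ \<Rightarrow> 'k::field) \<in> Rec q p \<longleftrightarrow>
    finite (right_quotient p A ` words p)"
proof
  let ?M = "transducer_matrix q p \<tau> :: _ \<Rightarrow> 'k"
  let ?G = "\<lambda>g. graph_matrix p (tau g) :: _ \<Rightarrow> 'k"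
  assume "?M \<in> Rec q p"
  then obtain B where "finite B" and shifts: "\<forall>(S, T)\<in>pairs q p. rho S T ?M \<in> lin_span B"
    unfolding Rec_def by blast
  have "?G (right_quotient p A T) \<in> {f \<in> lin_span B. range f \<subseteq> {0, 1}}" if "T \<in> words p" for T
  proof -
    have "(\<tau> T, T) \<in> pairs q p"
      using that A \<tau> tau_in_words by (simp add: pairs_def)
    moreover have "rho (\<tau> T) T ?M = ?G (right_quotient p A T)"
      using rho_transducer_matrix[OF A \<tau> that, of "\<tau> T"] \<tau> that by simp
    ultimately have "?G (right_quotient p A T) \<in> lin_span B"
      using shifts by fastforce
    then show ?thesis
      using range_graph_matrix by blast
  qed
  then have "finite (?G ` right_quotient p A ` words p)"
    using finite_lin_span_range_subset[OF \<open>finite B\<close>, of "{0, 1}"]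
    by (blast intro: finite_subset)
  moreover have "inj_on ?G (right_quotient p A ` words p)"
  proof (rule inj_onI, clarify)
    fix T T' assume eq: "?G (right_quotient p A T) = ?G (right_quotient p A T')"
    have "right_quotient p A T w = right_quotient p A T' w" for w
    proof (cases "w \<in> words p \<and> w \<noteq> []")
      case True
      then show ?thesis using graph_matrix_eqD[OF eq] tau_eqD by blast
    qed (auto simp: right_quotient_def)
    then show "right_quotient p A T = right_quotient p A T'" ..
  qed
  ultimately show "finite (right_quotient p A ` words p)"
    using finite_imageD by blast
next
  let ?M = "transducer_matrix q p \<tau> :: _ \<Rightarrow> 'k"
  let ?B = "(\<lambda>g. graph_matrix p (tau g) :: _ \<Rightarrow> 'k) ` right_quotient p A ` words p"
  assume "finite (right_quotient p A ` words p)"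
  then have "finite ?B" by blast
  moreover have "rho S T ?M \<in> lin_span ?B" if "(S, T) \<in> pairs q p" for S T
    using that rho_transducer_matrix[OF A \<tau>, of T S]
    by (cases "\<tau> T = S") (auto simp: pairs_def lin_span_zero intro: lin_span_superset)
  ultimately show "?M \<in> Rec q p"
    unfolding Rec_def by blast
qed

lemma right_quotient_cong:
  assumes "\<forall>w\<in>words p. tau A w = tau A' w" and "T \<in> words p"
  shows "right_quotient p A T = right_quotient p A' T"
proof
  fix w
  show "right_quotient p A T w = right_quotient p A' T w"
  proof (cases "w \<in> words p \<and> w \<noteq> []")
    case True
    then have "tau A (w @ T) = tau A' (w @ T)" using assms by simp
    then have "A (w @ T) = A' (w @ T)" using tau_eqD True by blast
    then show ?thesis by (simp add: right_quotient_def)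
  qed (auto simp: right_quotient_def)
qed

lemma finite_state_transducer_iff_finite_right_quotients:
  assumes A: "\<forall>w\<in>words p. A w < q" and \<tau>: "\<forall>w\<in>words p. \<tau> w = tau A w"
  shows "finite_state_transducer p q \<tau> \<longleftrightarrow> finite (right_quotient p A ` words p)"
proof
  assume "finite_state_transducer p q \<tau>"
  then obtain A' where A': "\<forall>w\<in>words p. A' w < q" "automatic p A'" "\<forall>w\<in>words p. \<tau> w = tau A' w"
    unfolding finite_state_transducer_def by blast
  have "finite (right_quotient p A' ` words p)"
    using A'(2) by (rule finite_right_quotients_if_automatic)
  moreover have "right_quotient p A' ` words p = right_quotient p A ` words p"
    using A'(3) \<tau> right_quotient_cong[of p A' A] by (intro image_cong) auto
  ultimately show "finite (right_quotient p A ` words p)" by simp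
next
  assume "finite (right_quotient p A ` words p)"
  moreover have "finite (A ` words p)"
    using A by (intro finite_subset[OF _ finite_lessThan[of q]]) auto
  ultimately have "automatic p A"
    using automatic_iff_finite_right_quotients by blast
  then show "finite_state_transducer p q \<tau>"
    unfolding finite_state_transducer_def using A \<tau> by blast
qed

theorem mainTheorem18:
  fixes p q :: nat and \<tau> :: "nat list \<Rightarrow> nat list"
  assumes "is_transducer p q \<tau>"
  shows "((transducer_matrix q p \<tau> :: nat list \<times> nat list \<Rightarrow> 'k::field) \<in> Rec q p)
           \<longleftrightarrow> finite_state_transducer p q \<tau>"
proof -
  obtain A where A: "\<forall>w\<in>words p. A w < q" and \<tau>: "\<forall>w\<in>words p. \<tau> w = tau A w"
    using assms unfolding is_transducer_def by blast
  show ?thesis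
    using transducer_matrix_in_Rec_iff[OF A \<tau>] finite_state_transducer_iff_finite_right_quotients[OF A \<tau>]
    by simp
qed

end
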